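(* Let $G$ be a group such that $Q=\mathrm{Core}(G)$ is latin, and let $\theta:G\times G\to G$ be given by $\theta_{x,y}=xy^{-1}$ (a quandle cocycle of $Q$ with values in $G$). Then $\theta$ is cohomologous to the trivial cocycle if and only if $G$ is abelian.
   Context: $\mathrm{Core}(G)$ is the quandle on $G$ with $x*y=xy^{-1}x$; a quandle is latin if every right translation $y\mapsto y*x$ is bijective. A quandle cocycle of a quandle $Q$ with values in $G$ is $\theta:Q\times Q\to G$ with $\theta_{x*y,x*z}\theta_{x,z}=\theta_{x,y*z}\theta_{y,z}$ and $\theta_{x,x}=1$; $\theta$ is cohomologous to the trivial cocycle (constantly $1$) if there exists $\gamma:Q\to G$ with $\theta_{x,y}=\gamma_{x*y}\gamma_y^{-1}$ for all $x,y\in Q$. *)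

theory Defs
  imports "HOL-Algebra.Group"
begin

definition core_op :: "('a, 'b) monoid_scheme \<Rightarrow> 'a \<Rightarrow> 'a \<Rightarrow> 'a" where
  "core_op G x y = x \<otimes>\<^bsub>G\<^esub> inv\<^bsub>G\<^esub> y \<otimes>\<^bsub>G\<^esub> x"

definition latin_quandle :: "'a set \<Rightarrow> ('a \<Rightarrow> 'a \<Rightarrow> 'a) \<Rightarrow> bool" where
  "latin_quandle Q op \<longleftrightarrow> (\<forall>x\<in>Q. bij_betw (\<lambda>y. op y x) Q Q)"

definition quandle_cocycle ::
  "'a set \<Rightarrow> ('a \<Rightarrow> 'a \<Rightarrow> 'a) \<Rightarrow> ('g, 'c) monoid_scheme \<Rightarrow> ('a \<Rightarrow> 'a \<Rightarrow> 'g) \<Rightarrow> bool" where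
  "quandle_cocycle Q op H \<theta> \<longleftrightarrow>
     (\<forall>x\<in>Q. \<forall>y\<in>Q. \<theta> x y \<in> carrier H) \<and>
     (\<forall>x\<in>Q. \<forall>y\<in>Q. \<forall>z\<in>Q.
        \<theta> (op x y) (op x z) \<otimes>\<^bsub>H\<^esub> \<theta> x z = \<theta> x (op y z) \<otimes>\<^bsub>H\<^esub> \<theta> y z) \<and>
     (\<forall>x\<in>Q. \<theta> x x = \<one>\<^bsub>H\<^esub>)"

definition cohomologous_to_trivial ::
  "'a set \<Rightarrow> ('a \<Rightarrow> 'a \<Rightarrow> 'a) \<Rightarrow> ('g, 'c) monoid_scheme \<Rightarrow> ('a \<Rightarrow> 'a \<Rightarrow> 'g) \<Rightarrow> bool" where
  "cohomologous_to_trivial Q op H \<theta> \<longleftrightarrow>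
     (\<exists>\<gamma>. (\<forall>x\<in>Q. \<gamma> x \<in> carrier H) \<and>
        (\<forall>x\<in>Q. \<forall>y\<in>Q. \<theta> x y = \<gamma> (op x y) \<otimes>\<^bsub>H\<^esub> inv\<^bsub>H\<^esub> (\<gamma> y)))"

end

theory Submission
  imports Defs
begin

text \<open>Right translation by \<open>\<one>\<close> in \<open>Core(G)\<close> is squaring, so \<open>Core(G)\<close> latin makes squaring a
  bijection of \<open>G\<close>. If \<open>x y\<inverse> = \<gamma>(x y\<inverse> x) \<gamma>(y)\<inverse>\<close>, then \<open>\<gamma>(x y\<inverse> x) = x y\<inverse> \<gamma>(y)\<close>, in particular
  \<open>\<gamma>(v\<^sup>2) = v \<gamma>(\<one>)\<close>. Writing \<open>x u\<^sup>-\<^sup>2 x = w\<^sup>2\<close>, the two formulas give \<open>w \<gamma>(\<one>) = x u\<inverse> \<gamma>(\<one>)\<close>, so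
  \<open>(x u\<inverse>)\<^sup>2 = x u\<^sup>-\<^sup>2 x\<close>, i.e. \<open>x\<close> commutes with \<open>u\<inverse>\<close>. Conversely, in an abelian group the
  square root \<open>\<gamma> = \<surd>\<close> works, since \<open>x y\<inverse> \<surd>y\<close> and \<open>\<surd>(x y\<inverse> x)\<close> have the same square.\<close>

lemma (in group) inv_cancel_left [simp]:
  "x \<in> carrier G \<Longrightarrow> a \<in> carrier G \<Longrightarrow> x \<otimes> (inv x \<otimes> a) = a"
  "x \<in> carrier G \<Longrightarrow> a \<in> carrier G \<Longrightarrow> inv x \<otimes> (x \<otimes> a) = a"
  by (simp_all add: m_assoc[symmetric])

lemma (in group) core_op_one: "y \<in> carrier G \<Longrightarrow> core_op G y \<one> = y \<otimes> y"
  by (simp add: core_op_def)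

lemma (in group) bij_square_if_latin_core:
  assumes "latin_quandle (carrier G) (core_op G)"
  shows "bij_betw (\<lambda>y. y \<otimes> y) (carrier G) (carrier G)"
proof -
  have "bij_betw (\<lambda>y. core_op G y \<one>) (carrier G) (carrier G)"
    using assms unfolding latin_quandle_def by blast
  then show ?thesis
    by (rule bij_betw_cong[THEN iffD1, rotated]) (simp add: core_op_one)
qed

lemma (in group) quandle_cocycle_core_div:
  "quandle_cocycle (carrier G) (core_op G) G (\<lambda>x y. x \<otimes> inv y)"
proof -
  have "x \<otimes> inv y \<otimes> x \<otimes> inv (x \<otimes> inv z \<otimes> x) \<otimes> (x \<otimes> inv z) = x \<otimes> inv y"
    and "x \<otimes> inv (y \<otimes> inv z \<otimes> y) \<otimes> (y \<otimes> inv z) = x \<otimes> inv y"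
    if "x \<in> carrier G" "y \<in> carrier G" "z \<in> carrier G" for x y z
    using that by (simp_all add: inv_mult_group m_assoc)
  then show ?thesis
    unfolding quandle_cocycle_def core_op_def by auto
qed

lemma (in group) comm_group_if_cohomologous_trivial:
  assumes square_surj: "(\<lambda>y. y \<otimes> y) ` carrier G = carrier G"
    and "cohomologous_to_trivial (carrier G) (core_op G) G (\<lambda>x y. x \<otimes> inv y)"
  shows "comm_group G"
proof -
  obtain \<gamma> where \<gamma>_closed: "\<And>x. x \<in> carrier G \<Longrightarrow> \<gamma> x \<in> carrier G"
    and \<gamma>_eq: "\<And>x y. x \<in> carrier G \<Longrightarrow> y \<in> carrier G \<Longrightarrow>
                  x \<otimes> inv y = \<gamma> (x \<otimes> inv y \<otimes> x) \<otimes> inv (\<gamma> y)"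
    using assms(2) unfolding cohomologous_to_trivial_def core_op_def by blast
  have \<gamma>_core: "\<gamma> (x \<otimes> inv y \<otimes> x) = x \<otimes> inv y \<otimes> \<gamma> y"
    if "x \<in> carrier G" "y \<in> carrier G" for x y
    using \<gamma>_eq[OF that] that by (simp add: \<gamma>_closed inv_solve_right)
  define c where "c = \<gamma> \<one>"
  have c_closed: "c \<in> carrier G"
    by (simp add: c_def \<gamma>_closed)
  have \<gamma>_square: "\<gamma> (v \<otimes> v) = v \<otimes> c" if "v \<in> carrier G" for v
    using \<gamma>_core[OF that one_closed] that by (simp add: c_def)
  have inv_commute: "inv u \<otimes> x = x \<otimes> inv u"
    if x: "x \<in> carrier G" and u: "u \<in> carrier G" for x u
  proof -
    obtain w where w: "w \<in> carrier G" "w \<otimes> w = x \<otimes> inv (u \<otimes> u) \<otimes> x"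
      using square_surj x u by (metis (no_types, lifting) imageE inv_closed m_closed)
    have "w \<otimes> c = \<gamma> (x \<otimes> inv (u \<otimes> u) \<otimes> x)"
      using \<gamma>_square w by metis
    also have "\<dots> = x \<otimes> inv (u \<otimes> u) \<otimes> (u \<otimes> c)"
      using \<gamma>_core \<gamma>_square x u by simp
    also have "\<dots> = x \<otimes> inv u \<otimes> c"
      using x u c_closed by (simp add: inv_mult_group m_assoc)
    finally have "w = x \<otimes> inv u"
      using w x u c_closed by simp
    with w have "x \<otimes> inv u \<otimes> (x \<otimes> inv u) = x \<otimes> inv u \<otimes> (inv u \<otimes> x)"
      using x u by (simp add: inv_mult_group m_assoc)
    then show ?thesis
      using x u by simp
  qed
  show ?thesis
  proof (rule group_comm_groupI)
    fix x y
    assume "x \<in> carrier G" "y \<in> carrier G"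
    then show "x \<otimes> y = y \<otimes> x"
      using inv_commute[of x "inv y"] by simp
  qed
qed

lemma (in comm_group) cohomologous_trivial_if_bij_square:
  assumes square_bij: "bij_betw (\<lambda>y. y \<otimes> y) (carrier G) (carrier G)"
  shows "cohomologous_to_trivial (carrier G) (core_op G) G (\<lambda>x y. x \<otimes> inv y)"
proof -
  define square_root where "square_root = inv_into (carrier G) (\<lambda>y. y \<otimes> y)"
  have root_closed: "square_root z \<in> carrier G"
    and root_square: "square_root z \<otimes> square_root z = z" if "z \<in> carrier G" for z
    using that square_bij unfolding square_root_def
    by (auto intro: inv_into_into f_inv_into_f[where f = "\<lambda>y. y \<otimes> y"] simp: bij_betw_def)
  have root_core: "square_root (x \<otimes> inv y \<otimes> x) = x \<otimes> inv y \<otimes> square_root y"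
    if x: "x \<in> carrier G" and y: "y \<in> carrier G" for x y
  proof (rule inj_onD[OF bij_betw_imp_inj_on[OF square_bij]])
    have "x \<otimes> inv y \<otimes> square_root y \<otimes> (x \<otimes> inv y \<otimes> square_root y)
        = x \<otimes> inv y \<otimes> x \<otimes> inv y \<otimes> (square_root y \<otimes> square_root y)"
      using x y root_closed by (simp add: m_ac)
    also have "\<dots> = x \<otimes> inv y \<otimes> x"
      using x y by (simp add: root_square m_assoc)
    finally show "square_root (x \<otimes> inv y \<otimes> x) \<otimes> square_root (x \<otimes> inv y \<otimes> x)
        = x \<otimes> inv y \<otimes> square_root y \<otimes> (x \<otimes> inv y \<otimes> square_root y)"
      using x y by (simp add: root_square)
  qed (use x y root_closed in auto)
  have "x \<otimes> inv y = square_root (x \<otimes> inv y \<otimes> x) \<otimes> inv (square_root y)"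
    if "x \<in> carrier G" "y \<in> carrier G" for x y
    unfolding root_core[OF that] using that by (simp add: root_closed m_assoc)
  then show ?thesis
    unfolding cohomologous_to_trivial_def core_op_def
    by (intro exI[of _ square_root]) (simp add: root_closed)
qed

theorem proposition4p5:
  fixes G :: "('a, 'b) monoid_scheme"
  assumes "group G"
    and "latin_quandle (carrier G) (core_op G)"
  shows "quandle_cocycle (carrier G) (core_op G) G (\<lambda>x y. x \<otimes>\<^bsub>G\<^esub> inv\<^bsub>G\<^esub> y)
       \<and> (cohomologous_to_trivial (carrier G) (core_op G) G (\<lambda>x y. x \<otimes>\<^bsub>G\<^esub> inv\<^bsub>G\<^esub> y)
            \<longleftrightarrow> comm_group G)"
proof -
  interpret group G by (rule assms(1))
  have square_bij: "bij_betw (\<lambda>y. y \<otimes>\<^bsub>G\<^esub> y) (carrier G) (carrier G)"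
    using assms(2) by (rule bij_square_if_latin_core)
  show ?thesis
    using quandle_cocycle_core_div
      comm_group_if_cohomologous_trivial[OF bij_betw_imp_surj_on[OF square_bij]]
      comm_group.cohomologous_trivial_if_bij_square[OF _ square_bij]
    by blast
qed

end
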